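(* Let $\mathbf{W}$ be a random variable with values in $\mathbb{W}=\mathbb{R}^{n_w}$ taking a finite number of values, with (finite) support $\mathrm{Supp}(\mathbf{W})$. Let $L:\mathbb{X}\times\mathbb{U}\times\mathbb{W}\times\mathbb{P}\to\,]-\infty,+\infty]$ be a function and $f:\mathbb{X}\times\mathbb{U}\times\mathbb{W}\to\mathbb{X}$ be a mapping which is affine in $(x,u)$. Define the Bellman operator $\mathcal{B}$, acting on functions $\varphi:\mathbb{X}\times\mathbb{P}\to\,]-\infty,+\infty]$, by $$\mathcal{B}(\varphi)(x,p)=\inf_{u\in\mathbb{U}}\mathbb{E}\big[L(x,u,\mathbf{W},p)+\varphi\big(f(x,u,\mathbf{W}),p\big)\big],\qquad\forall (x,p)\in\mathbb{X}\times\mathbb{P}.$$ For $w\in\mathrm{Supp}(\mathbf{W})$ write $L_w=L(\cdot,\cdot,w,\cdot)$. Then: 1. If $L_w\in\Gamma_{\mathcal{K}}[\mathbb{X}\times\mathbb{U},\mathbb{P}]$ for all $w\in\mathrm{Supp}(\mathbf{W})$, then $\mathcal{B}$ maps $\Gamma[\mathbb{X},\mathbb{P}]$ into itself. 2. If, for a given set $\mathcal{P}\subset\mathbb{P}$, $L_w\in\Theta_{\mathcal{K}}[\mathbb{X}\times\mathbb{U},\mathcal{P}]$ for all $w\in\mathrm{Supp}(\mathbf{W})$, then $\mathcal{B}$ maps $\Theta[\mathbb{X},\mathcal{P}]$ into itself. Moreover, for every $\varphi\in\Theta[\mathbb{X},\mathcal{P}]$ and all $(x,p)\in\mathrm{dom}(\mathcal{B}(\varphi))$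 with $p\in\mathrm{int}\,\mathcal{P}$, the infimum defining $\mathcal{B}(\varphi)(x,p)$ is attained (the argmin set is nonempty) and the gradient of $\mathcal{B}(\varphi)(x,\cdot)$ at $p$ is $$\nabla_p\mathcal{B}(\varphi)(x,p)=\mathbb{E}\big[\nabla_pL(x,u^\star,\mathbf{W},p)+\nabla_p\varphi\big(f(x,u^\star,\mathbf{W}),p\big)\big]$$ for any $u^\star\in\mathbb{U}$ in the argmin set of the infimum defining $\mathcal{B}(\varphi)(x,p)$.
   Context: $\mathbb{X}=\mathbb{R}^{n_x}$, $\mathbb{U}=\mathbb{R}^{n_u}$, $\mathbb{P}=\mathbb{R}^{n_p}$ are Euclidean spaces. For a function $g$ with values in $]-\infty,+\infty]$, $\mathrm{dom}\,g=\{g<+\infty\}$. For a Euclidean space $\mathbb{Y}$: $\Gamma[\mathbb{Y},\mathbb{P}]$ is the set of lower semicontinuous convex functions $\gamma:\mathbb{Y}\times\mathbb{P}\to\,]-\infty,+\infty]$. For $\mathcal{P}\subset\mathbb{P}$, $\Theta[\mathbb{Y},\mathcal{P}]$ is the set of $\theta\in\Gamma[\mathbb{Y},\mathbb{P}]$ such that (i) $\mathrm{dom}\,\theta=Y_\theta\times\mathcal{P}$ for some (possibly empty) set $Y_\theta\subset\mathbb{Y}$, and (ii) for all $y\in Y_\theta$, $\theta(y,\cdot)$ is differentiable on $\mathrm{int}\,\mathcal{P}$. $\Gamma_{\mathcal{K}}[\mathbb{X}\times\mathbb{U},\mathbb{P}]$ is the set of $\gamma\in\Gamma[\mathbb{X}\times\mathbb{U},\mathbb{P}]$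 for which there is a compact set $\mathcal{K}_\gamma\subset\mathbb{U}$ with $\mathrm{dom}\,\gamma(x,\cdot,p)\subset\mathcal{K}_\gamma$ for all $(x,p)\in\mathbb{X}\times\mathbb{P}$. $\Theta_{\mathcal{K}}[\mathbb{X}\times\mathbb{U},\mathcal{P}]=\Theta[\mathbb{X}\times\mathbb{U},\mathcal{P}]\cap\Gamma_{\mathcal{K}}[\mathbb{X}\times\mathbb{U},\mathbb{P}]$. "Maps into itself" means $\mathcal{B}(\varphi)$ belongs to the class whenever $\varphi$ does. *)

theory Defs
  imports "HOL-Analysis.Analysis" "HOL-Probability.Probability"
begin

definition lsc_fun :: "('a::topological_space \<Rightarrow> ereal) \<Rightarrow> bool" where
  "lsc_fun g \<longleftrightarrow> (\<forall>c::real. closed {z. g z \<le> ereal c})"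

text \<open>Convexity of a function with values in ]-oo,+oo] (convention 0 * oo = 0).\<close>
definition convex_fun :: "('a::real_vector \<Rightarrow> ereal) \<Rightarrow> bool" where
  "convex_fun g \<longleftrightarrow> (\<forall>a b t. 0 \<le> t \<and> t \<le> 1 \<longrightarrow>
      g ((1 - t) *\<^sub>R a + t *\<^sub>R b) \<le> ereal (1 - t) * g a + ereal t * g b)"

definition Gamma :: "('y::euclidean_space \<Rightarrow> 'p::euclidean_space \<Rightarrow> ereal) set" where
  "Gamma = {\<gamma>. (\<forall>y p. \<gamma> y p \<noteq> -\<infinity>) \<and> lsc_fun (\<lambda>(y,p). \<gamma> y p)
                \<and> convex_fun (\<lambda>(y,p). \<gamma> y p)}"

definition Theta :: "'p set \<Rightarrow> ('y::euclidean_space \<Rightarrow> 'p::euclidean_space \<Rightarrow> ereal) set" where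
  "Theta P0 = {\<theta>. \<theta> \<in> Gamma \<and>
     (\<exists>Y. {(y,p). \<theta> y p < \<infinity>} = Y \<times> P0 \<and>
          (\<forall>y\<in>Y. \<forall>q\<in>interior P0. (\<lambda>p. real_of_ereal (\<theta> y p)) differentiable (at q)))}"

definition GammaK :: "('x::euclidean_space \<times> 'u::euclidean_space \<Rightarrow> 'p::euclidean_space \<Rightarrow> ereal) set" where
  "GammaK = {\<gamma>. \<gamma> \<in> Gamma \<and> (\<exists>K. compact K \<and> (\<forall>x p. {u. \<gamma> (x,u) p < \<infinity>} \<subseteq> K))}"

definition ThetaK :: "'p set \<Rightarrow> ('x::euclidean_space \<times> 'u::euclidean_space \<Rightarrow> 'p::euclidean_space \<Rightarrow> ereal) set" where
  "ThetaK P0 = Theta P0 \<inter> GammaK"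

definition affine_map :: "('a::real_vector \<Rightarrow> 'b::real_vector) \<Rightarrow> bool" where
  "affine_map g \<longleftrightarrow> (\<exists>h b. linear h \<and> (\<forall>z. g z = h z + b))"

definition expect :: "'w pmf \<Rightarrow> ('w \<Rightarrow> ereal) \<Rightarrow> ereal" where
  "expect W g = (\<Sum>w\<in>set_pmf W. ereal (pmf W w) * g w)"

definition bellman :: "'w pmf \<Rightarrow> ('x \<Rightarrow> 'u \<Rightarrow> 'w \<Rightarrow> 'p \<Rightarrow> ereal) \<Rightarrow> ('x \<Rightarrow> 'u \<Rightarrow> 'w \<Rightarrow> 'x)
     \<Rightarrow> ('x \<Rightarrow> 'p \<Rightarrow> ereal) \<Rightarrow> 'x \<Rightarrow> 'p \<Rightarrow> ereal" where
  "bellman W L f \<phi> x p = (INF u. expect W (\<lambda>w. L x u w p + \<phi> (f x u w) p))"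

definition Lw :: "('x \<Rightarrow> 'u \<Rightarrow> 'w \<Rightarrow> 'p \<Rightarrow> ereal) \<Rightarrow> 'w \<Rightarrow> 'x \<times> 'u \<Rightarrow> 'p \<Rightarrow> ereal" where
  "Lw L w = (\<lambda>xu p. L (fst xu) (snd xu) w p)"

definition grad :: "('p::euclidean_space \<Rightarrow> real) \<Rightarrow> 'p \<Rightarrow> 'p" where
  "grad g p = (SOME v. (g has_derivative (\<lambda>h. v \<bullet> h)) (at p))"

end

theory Submission
  imports Defs
begin

text \<open>The Bellman operator is the infimal projection over the control \<open>u\<close> of the objective
  \<open>((x, u), p) \<mapsto> E[L(x, u, W, p) + \<phi>(f(x, u, W), p)]\<close>. For finitely supported \<open>W\<close> this
  objective is a positive combination of lower semicontinuous convex functions composed with affine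
  maps, so it lies in \<open>\<Gamma>\<close>, and a single \<open>L\<^sub>w\<close> already confines its domain in \<open>u\<close> to a
  compact set. Compactness makes the infimum attained and the projection lower semicontinuous;
  joint convexity passes to the projection. In the \<open>\<Theta>\<close> case the rectangular domain is inherited
  from the \<open>L\<^sub>w\<close> and \<open>\<phi>\<close>, and at an interior \<open>p\<close> the convex function \<open>B(\<phi>)(x, \<cdot>)\<close> lies below
  the differentiable function \<open>q \<mapsto> objective((x, u\<^sup>\<star>), q)\<close> with equality at \<open>p\<close>, which forces
  it to be differentiable at \<open>p\<close> with the same gradient.\<close>

lemma lsc_fun_iff_open: "lsc_fun g \<longleftrightarrow> (\<forall>c::real. open {z. ereal c < g z})"
proof -
  have "\<And>c. {z. ereal c < g z} = - {z. g z \<le> ereal c}" by auto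
  then show ?thesis unfolding lsc_fun_def by (simp add: closed_def)
qed

lemma lsc_fun_compose:
  assumes "lsc_fun g" "continuous_on UNIV h"
  shows "lsc_fun (\<lambda>z. g (h z))"
proof -
  have "closed (h -` {z. g z \<le> ereal c})" for c
    using assms(1) by (intro closed_vimage assms(2)) (simp add: lsc_fun_def)
  then show ?thesis unfolding lsc_fun_def by (simp add: vimage_def)
qed

lemma ereal_less_add_split:
  fixes a b :: ereal
  assumes "a \<noteq> -\<infinity>" "b \<noteq> -\<infinity>" "ereal c < a + b"
  shows "\<exists>c1. ereal c1 < a \<and> ereal (c - c1) < b"
proof (cases a)
  case (real ra)
  show ?thesis
  proof (cases b)
    case (real rb)
    then show ?thesis using \<open>a = ereal ra\<close> assms
      by (intro exI[of _ "ra - (ra + rb - c)/2"]) (auto simp: field_simps)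
  next
    case PInf
    then show ?thesis using \<open>a = ereal ra\<close> by (intro exI[of _ "ra - 1"]) auto
  qed (use assms in simp)
next
  case PInf
  obtain rb where "ereal rb < b" using assms(2)
    by (metis ereal_dense2 ereal_infty_less(2) less_ereal.elims(3))
  then show ?thesis using PInf by (intro exI[of _ "c - rb"]) auto
qed (use assms in simp)

lemma lsc_fun_add:
  assumes "lsc_fun g1" "lsc_fun g2" "\<And>z. g1 z \<noteq> -\<infinity>" "\<And>z. g2 z \<noteq> -\<infinity>"
  shows "lsc_fun (\<lambda>z. g1 z + g2 z)"
  unfolding lsc_fun_iff_open
proof
  fix c
  have "{z. ereal c < g1 z + g2 z} = (\<Union>c1. {z. ereal c1 < g1 z} \<inter> {z. ereal (c - c1) < g2 z})"
  proof safe
    fix z assume "ereal c < g1 z + g2 z"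
    then show "z \<in> (\<Union>c1. {z. ereal c1 < g1 z} \<inter> {z. ereal (c - c1) < g2 z})"
      using ereal_less_add_split[OF assms(3,4)] by blast
  next
    fix z c1 assume "ereal c1 < g1 z" "ereal (c - c1) < g2 z"
    then have "ereal c1 + ereal (c - c1) < g1 z + g2 z"
      by (cases "g1 z"; cases "g2 z") auto
    then show "ereal c < g1 z + g2 z" by simp
  qed
  moreover have "open (\<Union>c1. {z. ereal c1 < g1 z} \<inter> {z. ereal (c - c1) < g2 z})"
    using assms(1,2) unfolding lsc_fun_iff_open by blast
  ultimately show "open {z. ereal c < g1 z + g2 z}" by simp
qed

lemma lsc_fun_cmult:
  assumes "lsc_fun g" "r > 0"
  shows "lsc_fun (\<lambda>z. ereal r * g z)"
proof -
  have "ereal c < ereal r * y \<longleftrightarrow> ereal (c / r) < y" for c y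
    using assms(2) by (cases y) (auto simp: field_simps)
  then show ?thesis using assms(1) unfolding lsc_fun_iff_open by simp
qed

lemma lsc_fun_const: "lsc_fun (\<lambda>z. ereal a)"
  unfolding lsc_fun_def by (cases "\<forall>c. a \<le> c") auto

lemma sum_not_MInfty:
  fixes g :: "'a \<Rightarrow> ereal"
  assumes "\<And>i. i \<in> S \<Longrightarrow> g i \<noteq> -\<infinity>"
  shows "(\<Sum>i\<in>S. g i) \<noteq> -\<infinity>"
  using assms by (induction S rule: infinite_finite_induct) auto

lemma lsc_fun_sum:
  assumes "finite S" "\<And>i. i \<in> S \<Longrightarrow> lsc_fun (g i)" "\<And>i z. i \<in> S \<Longrightarrow> g i z \<noteq> -\<infinity>"
  shows "lsc_fun (\<lambda>z. \<Sum>i\<in>S. g i z)"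
  using assms
proof (induction S rule: finite_induct)
  case empty
  then show ?case using lsc_fun_const[of 0] by (simp add: zero_ereal_def)
next
  case (insert i S)
  then have "lsc_fun (\<lambda>z. g i z + (\<Sum>i\<in>S. g i z))"
    by (intro lsc_fun_add) (auto simp: sum_not_MInfty)
  then show ?case using insert by simp
qed

lemma convex_funI_finite:
  assumes "\<And>z. g z \<noteq> -\<infinity>"
    and "\<And>a b t. 0 < t \<Longrightarrow> t < 1 \<Longrightarrow> g a \<noteq> \<infinity> \<Longrightarrow> g b \<noteq> \<infinity> \<Longrightarrow>
      g ((1 - t) *\<^sub>R a + t *\<^sub>R b) \<le> ereal ((1 - t) * real_of_ereal (g a) + t * real_of_ereal (g b))"
  shows "convex_fun g"
  unfolding convex_fun_def
proof (intro allI impI)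
  fix a b and t :: real assume t: "0 \<le> t \<and> t \<le> 1"
  show "g ((1 - t) *\<^sub>R a + t *\<^sub>R b) \<le> ereal (1 - t) * g a + ereal t * g b"
  proof (cases "t = 0 \<or> t = 1")
    case True
    then show ?thesis by (auto simp flip: zero_ereal_def)
  next
    case False
    then have t': "0 < t" "t < 1" using t by auto
    show ?thesis
    proof (cases "g a = \<infinity> \<or> g b = \<infinity>")
      case True
      then have "ereal (1 - t) * g a + ereal t * g b = \<infinity>"
        using t' assms(1)[of a] assms(1)[of b] by (cases "g a"; cases "g b") auto
      then show ?thesis by (metis top_greatest top_ereal_def)
    next
      case False
      then obtain ra rb where "g a = ereal ra" "g b = ereal rb"
        using assms(1)[of a] assms(1)[of b] by (cases "g a"; cases "g b") auto
      then show ?thesis using assms(2)[OF t', of a b] by simp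
    qed
  qed
qed

lemma convex_funD_finite:
  assumes "convex_fun g" "g a \<noteq> \<infinity>" "g b \<noteq> \<infinity>" "g a \<noteq> -\<infinity>" "g b \<noteq> -\<infinity>" "0 \<le> t" "t \<le> 1"
  shows "g ((1 - t) *\<^sub>R a + t *\<^sub>R b) \<le> ereal ((1 - t) * real_of_ereal (g a) + t * real_of_ereal (g b))"
proof -
  obtain ra rb where "g a = ereal ra" "g b = ereal rb"
    using assms by (cases "g a"; cases "g b") auto
  with assms(1,6,7) show ?thesis unfolding convex_fun_def by (metis real_of_ereal.simps(1) times_ereal.simps(1) plus_ereal.simps(1))
qed

lemma convex_fun_add:
  assumes "convex_fun g1" "convex_fun g2" "\<And>z. g1 z \<noteq> -\<infinity>" "\<And>z. g2 z \<noteq> -\<infinity>"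
  shows "convex_fun (\<lambda>z. g1 z + g2 z)"
proof (rule convex_funI_finite)
  show "g1 z + g2 z \<noteq> -\<infinity>" for z using assms(3,4)[of z] by simp
  fix a b and t :: real
  assume t: "0 < t" "t < 1" and fin: "g1 a + g2 a \<noteq> \<infinity>" "g1 b + g2 b \<noteq> \<infinity>"
  have f: "g1 a \<noteq> \<infinity>" "g2 a \<noteq> \<infinity>" "g1 b \<noteq> \<infinity>" "g2 b \<noteq> \<infinity>"
    using fin assms(3,4) by auto
  have "g1 ((1 - t) *\<^sub>R a + t *\<^sub>R b) + g2 ((1 - t) *\<^sub>R a + t *\<^sub>R b)
     \<le> ereal ((1 - t) * real_of_ereal (g1 a) + t * real_of_ereal (g1 b))
       + ereal ((1 - t) * real_of_ereal (g2 a) + t * real_of_ereal (g2 b))"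
    using convex_funD_finite[OF assms(1) f(1,3)] convex_funD_finite[OF assms(2) f(2,4)] assms(3,4) t
    by (intro add_mono) auto
  also have "\<dots> = ereal ((1 - t) * real_of_ereal (g1 a + g2 a) + t * real_of_ereal (g1 b + g2 b))"
    using f assms(3,4)[of a] assms(3,4)[of b]
    by (cases "g1 a"; cases "g2 a"; cases "g1 b"; cases "g2 b") (auto simp: algebra_simps)
  finally show "g1 ((1 - t) *\<^sub>R a + t *\<^sub>R b) + g2 ((1 - t) *\<^sub>R a + t *\<^sub>R b)
     \<le> ereal ((1 - t) * real_of_ereal (g1 a + g2 a) + t * real_of_ereal (g1 b + g2 b))" .
qed

lemma convex_fun_cmult:
  assumes "convex_fun g" "r > 0" "\<And>z. g z \<noteq> -\<infinity>"
  shows "convex_fun (\<lambda>z. ereal r * g z)"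
proof (rule convex_funI_finite)
  show "ereal r * g z \<noteq> -\<infinity>" for z using assms(2) assms(3)[of z] by (cases "g z") auto
  fix a b and t :: real
  assume t: "0 < t" "t < 1" and fin: "ereal r * g a \<noteq> \<infinity>" "ereal r * g b \<noteq> \<infinity>"
  have f: "g a \<noteq> \<infinity>" "g b \<noteq> \<infinity>" using fin assms(2) by auto
  have "ereal r * g ((1 - t) *\<^sub>R a + t *\<^sub>R b)
      \<le> ereal r * ereal ((1 - t) * real_of_ereal (g a) + t * real_of_ereal (g b))"
    using convex_funD_finite[OF assms(1) f] assms(2,3) t by (intro ereal_mult_left_mono) auto
  also have "\<dots> = ereal ((1 - t) * real_of_ereal (ereal r * g a) + t * real_of_ereal (ereal r * g b))"
    using f assms(3)[of a] assms(3)[of b] by (cases "g a"; cases "g b") (auto simp: algebra_simps)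
  finally show "ereal r * g ((1 - t) *\<^sub>R a + t *\<^sub>R b)
      \<le> ereal ((1 - t) * real_of_ereal (ereal r * g a) + t * real_of_ereal (ereal r * g b))" .
qed

lemma convex_fun_sum:
  assumes "finite S" "\<And>i. i \<in> S \<Longrightarrow> convex_fun (g i)" "\<And>i z. i \<in> S \<Longrightarrow> g i z \<noteq> -\<infinity>"
  shows "convex_fun (\<lambda>z. \<Sum>i\<in>S. g i z)"
  using assms
proof (induction S rule: finite_induct)
  case empty
  then show ?case by (simp add: convex_fun_def)
next
  case (insert i S)
  then have "convex_fun (\<lambda>z. g i z + (\<Sum>i\<in>S. g i z))"
    by (intro convex_fun_add) (auto simp: sum_not_MInfty)
  then show ?case using insert by simp
qed

lemma affine_map_convex_combination:
  assumes "affine_map h"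
  shows "h ((1 - t) *\<^sub>R a + t *\<^sub>R b) = (1 - t) *\<^sub>R h a + t *\<^sub>R h b"
proof -
  obtain l c where "linear l" "\<And>z. h z = l z + c" using assms unfolding affine_map_def by blast
  moreover have "l ((1 - t) *\<^sub>R a + t *\<^sub>R b) = (1 - t) *\<^sub>R l a + t *\<^sub>R l b"
    by (simp only: linear_add[OF \<open>linear l\<close>] linear_scale[OF \<open>linear l\<close>])
  ultimately show ?thesis by (simp add: algebra_simps)
qed

lemma convex_fun_compose_affine:
  assumes "convex_fun g" "affine_map h"
  shows "convex_fun (\<lambda>z. g (h z))"
  using assms(1) unfolding convex_fun_def affine_map_convex_combination[OF assms(2)] by blast

lemma affine_map_continuous:
  fixes h :: "'a::euclidean_space \<Rightarrow> 'b::real_normed_vector"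
  assumes "affine_map h"
  shows "continuous_on UNIV h"
proof -
  obtain l c where "linear l" "\<And>z. h z = l z + c" using assms unfolding affine_map_def by blast
  moreover have "continuous_on UNIV l"
    using \<open>linear l\<close> by (simp add: linear_continuous_on linear_conv_bounded_linear)
  ultimately show ?thesis by (auto intro!: continuous_intros)
qed

lemma affine_map_map_prod:
  assumes "affine_map h"
  shows "affine_map (map_prod h (id :: 'b::real_vector \<Rightarrow> 'b))"
proof -
  obtain l c where l: "linear l" "\<And>z. h z = l z + c" using assms unfolding affine_map_def by blast
  have "linear (map_prod l (id :: 'b \<Rightarrow> 'b))"
    using l(1) by (intro linearI) (auto simp: linear_add linear_scale)
  moreover have "map_prod h id z = map_prod l id z + (c, 0)" for z :: "_ \<times> 'b"
    using l(2) by (cases z) simp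
  ultimately show ?thesis unfolding affine_map_def by blast
qed

lemma affine_map_Pair: "affine_map (\<lambda>q::'b::real_vector. (x::'a::real_vector, q))"
proof -
  have "linear (\<lambda>q::'b. (0::'a, q))" by (intro linearI) auto
  moreover have "(x, q) = (0, q) + (x, 0)" for q :: 'b by simp
  ultimately show ?thesis unfolding affine_map_def by blast
qed

lemma expect_not_MInfty:
  assumes "\<And>w. w \<in> set_pmf W \<Longrightarrow> g w \<noteq> -\<infinity>"
  shows "expect W g \<noteq> -\<infinity>"
  unfolding expect_def
proof (rule sum_not_MInfty)
  fix w assume "w \<in> set_pmf W"
  then show "ereal (pmf W w) * g w \<noteq> -\<infinity>"
    using assms pmf_nonneg[of W w] by (cases "g w") (auto simp: ereal_mult_eq_MInfty)
qed

lemma expect_eq_PInfty_iff: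
  assumes "finite (set_pmf W)" "\<And>w. w \<in> set_pmf W \<Longrightarrow> g w \<noteq> -\<infinity>"
  shows "expect W g = \<infinity> \<longleftrightarrow> (\<exists>w\<in>set_pmf W. g w = \<infinity>)"
proof -
  have "ereal (pmf W w) * g w = \<infinity> \<longleftrightarrow> g w = \<infinity>" if "w \<in> set_pmf W" for w
    using that assms(2)[OF that] pmf_positive[OF that] by (cases "g w") auto
  then show ?thesis unfolding expect_def using assms(1) by (auto simp: sum_Pinfty)
qed

lemma expect_ereal:
  assumes "\<And>w. w \<in> set_pmf W \<Longrightarrow> g w = ereal (h w)"
  shows "expect W g = ereal (\<Sum>w\<in>set_pmf W. pmf W w * h w)"
  unfolding expect_def by (simp add: assms)

lemma Gamma_add:
  assumes "\<gamma>1 \<in> Gamma" "\<gamma>2 \<in> Gamma"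
  shows "(\<lambda>y p. \<gamma>1 y p + \<gamma>2 y p) \<in> Gamma"
proof -
  let ?g1 = "\<lambda>(y, p). \<gamma>1 y p" and ?g2 = "\<lambda>(y, p). \<gamma>2 y p"
  have not_MInfty: "?g1 z \<noteq> -\<infinity>" "?g2 z \<noteq> -\<infinity>" for z
    using assms unfolding Gamma_def by (auto simp: case_prod_unfold)
  have "lsc_fun ?g1" "lsc_fun ?g2" "convex_fun ?g1" "convex_fun ?g2"
    using assms unfolding Gamma_def by blast+
  then have "lsc_fun (\<lambda>z. ?g1 z + ?g2 z)" "convex_fun (\<lambda>z. ?g1 z + ?g2 z)"
    using not_MInfty by (blast intro: lsc_fun_add convex_fun_add)+
  moreover have "\<gamma>1 y p + \<gamma>2 y p \<noteq> -\<infinity>" for y p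
    using not_MInfty[of "(y, p)"] by simp
  ultimately show ?thesis unfolding Gamma_def by (simp add: case_prod_unfold)
qed

lemma Gamma_compose_affine:
  assumes "\<gamma> \<in> Gamma" "affine_map A"
  shows "(\<lambda>z p. \<gamma> (A z) p) \<in> Gamma"
proof -
  let ?g = "\<lambda>(y, p). \<gamma> y p"
  have eq: "(\<lambda>(z, p). \<gamma> (A z) p) = (\<lambda>z. ?g (map_prod A id z))"
    by (simp add: case_prod_unfold)
  have "lsc_fun ?g" "convex_fun ?g" "\<And>y p. \<gamma> y p \<noteq> -\<infinity>"
    using assms(1) unfolding Gamma_def by blast+
  moreover have "affine_map (map_prod A id)"
    using assms(2) by (rule affine_map_map_prod)
  moreover note affine_map_continuous[OF this]
  ultimately show ?thesis
    unfolding Gamma_def mem_Collect_eq eq by (blast intro: lsc_fun_compose convex_fun_compose_affine)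
qed

lemma Gamma_expect:
  assumes "finite (set_pmf W)" "\<And>w. w \<in> set_pmf W \<Longrightarrow> \<gamma> w \<in> Gamma"
  shows "(\<lambda>y p. expect W (\<lambda>w. \<gamma> w y p)) \<in> Gamma"
proof -
  let ?g = "\<lambda>w (y, p). \<gamma> w y p"
  let ?term = "\<lambda>w z. ereal (pmf W w) * ?g w z"
  have eq: "(\<lambda>(y, p). expect W (\<lambda>w. \<gamma> w y p)) = (\<lambda>z. \<Sum>w\<in>set_pmf W. ?term w z)"
    by (simp add: expect_def case_prod_unfold)
  have g: "lsc_fun (?g w)" "convex_fun (?g w)" "?g w z \<noteq> -\<infinity>" if "w \<in> set_pmf W" for w z
    using assms(2)[OF that] unfolding Gamma_def by (auto simp: case_prod_unfold)
  have term_not_MInfty: "?term w z \<noteq> -\<infinity>" if "w \<in> set_pmf W" for w z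
    using g(3)[OF that, of z] pmf_nonneg[of W w] by (auto simp: ereal_mult_eq_MInfty)
  have "lsc_fun (\<lambda>z. \<Sum>w\<in>set_pmf W. ?term w z)"
  proof (rule lsc_fun_sum[OF assms(1)])
    show "lsc_fun (?term w)" if "w \<in> set_pmf W" for w
      using that g(1) by (intro lsc_fun_cmult) (auto simp: pmf_positive)
  qed (fact term_not_MInfty)
  moreover have "convex_fun (\<lambda>z. \<Sum>w\<in>set_pmf W. ?term w z)"
  proof (rule convex_fun_sum[OF assms(1)])
    show "convex_fun (?term w)" if "w \<in> set_pmf W" for w
      using that g(2,3) by (intro convex_fun_cmult) (auto simp: pmf_positive)
  qed (fact term_not_MInfty)
  moreover have "expect W (\<lambda>w. \<gamma> w y p) \<noteq> -\<infinity>" for y p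
    using g(3)[of _ "(y, p)"] by (intro expect_not_MInfty) simp
  ultimately show ?thesis unfolding Gamma_def mem_Collect_eq eq by blast
qed

lemma ThetaI:
  assumes "\<theta> \<in> Gamma"
    and "\<And>y p. \<theta> y p < \<infinity> \<Longrightarrow> p \<in> P0"
    and "\<And>y p q. \<theta> y p < \<infinity> \<Longrightarrow> q \<in> P0 \<Longrightarrow> \<theta> y q < \<infinity>"
    and "\<And>y p0 q. \<theta> y p0 < \<infinity> \<Longrightarrow> q \<in> interior P0 \<Longrightarrow>
      (\<lambda>p. real_of_ereal (\<theta> y p)) differentiable (at q)"
  shows "\<theta> \<in> Theta P0"
  unfolding Theta_def
proof (intro CollectI conjI exI)
  show "{(y, p). \<theta> y p < \<infinity>} = {y. \<exists>p. \<theta> y p < \<infinity>} \<times> P0"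
    using assms(2,3) by blast
  show "\<theta> \<in> Gamma" by (rule assms(1))
  show "\<forall>y\<in>{y. \<exists>p. \<theta> y p < \<infinity>}. \<forall>q\<in>interior P0. (\<lambda>p. real_of_ereal (\<theta> y p)) differentiable (at q)"
    using assms(4) by blast
qed

lemma ThetaD:
  assumes "\<theta> \<in> Theta P0"
  shows "\<theta> \<in> Gamma"
    and "\<theta> y p < \<infinity> \<Longrightarrow> p \<in> P0"
    and "\<theta> y p < \<infinity> \<Longrightarrow> q \<in> P0 \<Longrightarrow> \<theta> y q < \<infinity>"
    and "\<theta> y p0 < \<infinity> \<Longrightarrow> q \<in> interior P0 \<Longrightarrow> (\<lambda>p. real_of_ereal (\<theta> y p)) differentiable (at q)"
proof -
  obtain Y where Y: "{(y, p). \<theta> y p < \<infinity>} = Y \<times> P0"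
    "\<forall>y\<in>Y. \<forall>q\<in>interior P0. (\<lambda>p. real_of_ereal (\<theta> y p)) differentiable (at q)"
    using assms unfolding Theta_def by blast
  have dom: "\<theta> y p < \<infinity> \<longleftrightarrow> y \<in> Y \<and> p \<in> P0" for y p
    using Y(1) by blast
  show "\<theta> \<in> Gamma" using assms unfolding Theta_def by blast
  show "\<theta> y p < \<infinity> \<Longrightarrow> p \<in> P0" "\<theta> y p < \<infinity> \<Longrightarrow> q \<in> P0 \<Longrightarrow> \<theta> y q < \<infinity>"
    using dom by blast+
  show "\<theta> y p0 < \<infinity> \<Longrightarrow> q \<in> interior P0 \<Longrightarrow> (\<lambda>p. real_of_ereal (\<theta> y p)) differentiable (at q)"
    using dom Y(2) by blast
qed

section \<open>Infimal projection\<close>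

lemma lsc_fun_attains_INF:
  fixes F :: "'a::heine_borel \<Rightarrow> ereal"
  assumes lsc: "lsc_fun F" and K: "compact K" and dom: "\<And>u. F u \<noteq> \<infinity> \<Longrightarrow> u \<in> K"
  shows "\<exists>u. (INF u. F u) = F u"
proof (cases "(INF u. F u) = \<infinity>")
  case True
  then show ?thesis by (metis INF_lower UNIV_I top.extremum_uniqueI top_ereal_def)
next
  case False
  define m where "m = (INF u. F u)"
  define \<F> where "\<F> = {K \<inter> {u. F u \<le> ereal c} | c. m < ereal c}"
  have "\<Inter>\<F> \<noteq> {}"
  proof (rule compact_chain)
    show "compact S" if "S \<in> \<F>" for S
      using that K lsc unfolding \<F>_def lsc_fun_def by (auto intro: closed_Int_compact)
    show "{} \<notin> \<F>"
    proof
      assume "{} \<in> \<F>"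
      then obtain c where c: "m < ereal c" "K \<inter> {u. F u \<le> ereal c} = {}" unfolding \<F>_def by auto
      then obtain u where "F u < ereal c" unfolding m_def by (auto simp: INF_less_iff)
      then have "F u \<noteq> \<infinity>" by auto
      with dom have "u \<in> K" by blast
      with c \<open>F u < ereal c\<close> show False by auto
    qed
    show "S \<subseteq> T \<or> T \<subseteq> S" if ST: "S \<in> \<F> \<and> T \<in> \<F>" for S T
    proof -
      obtain c1 c2 where "S = K \<inter> {u. F u \<le> ereal c1}" "T = K \<inter> {u. F u \<le> ereal c2}"
        using ST unfolding \<F>_def by blast
      moreover have "c1 \<le> c2 \<or> c2 \<le> c1" by linarith
      ultimately show ?thesis by (auto intro: order.trans)
    qed
  qed
  then obtain u where u: "u \<in> \<Inter>\<F>" by blast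
  have "F u \<le> ereal c" if "m < ereal c" for c
    using u that unfolding \<F>_def by blast
  then have "F u \<le> m"
    by (metis dense_le_bounded ereal_dense2 less_ereal.elims(2) not_le)
  moreover have "m \<le> F u" unfolding m_def by (rule INF_lower) simp
  ultimately show ?thesis unfolding m_def by (intro exI[of _ u]) auto
qed

definition inf_projection :: "('x \<times> 'u \<Rightarrow> 'p \<Rightarrow> ereal) \<Rightarrow> 'x \<Rightarrow> 'p \<Rightarrow> ereal" where
  "inf_projection \<gamma> x p = (INF u. \<gamma> (x, u) p)"

lemma inf_projection_le: "inf_projection \<gamma> x p \<le> \<gamma> (x, u) p"
  unfolding inf_projection_def by (rule INF_lower) simp

lemma GammaK_dom_compact:
  assumes "\<gamma> \<in> GammaK"
  obtains K where "compact K" "\<And>x u p. \<gamma> (x, u) p \<noteq> \<infinity> \<Longrightarrow> u \<in> K"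
proof -
  obtain K where K: "compact K" "\<And>x p. {u. \<gamma> (x, u) p < \<infinity>} \<subseteq> K"
    using assms unfolding GammaK_def by blast
  have "u \<in> K" if "\<gamma> (x, u) p \<noteq> \<infinity>" for x u p
    using that K(2)[of x p] by auto
  with K(1) show thesis by (rule that)
qed

lemma inf_projection_attained:
  assumes "\<gamma> \<in> GammaK"
  obtains u where "inf_projection \<gamma> x p = \<gamma> (x, u) p"
proof -
  obtain K where K: "compact K" "\<And>u. \<gamma> (x, u) p \<noteq> \<infinity> \<Longrightarrow> u \<in> K"
    using GammaK_dom_compact[OF assms] by metis
  have "lsc_fun (\<lambda>(y, p). \<gamma> y p)"
    using assms unfolding GammaK_def Gamma_def by blast
  then have "lsc_fun (\<lambda>u. (\<lambda>(y, p). \<gamma> y p) ((x, u), p))"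
    by (rule lsc_fun_compose) (intro continuous_intros)
  then obtain u where "(INF u. \<gamma> (x, u) p) = \<gamma> (x, u) p"
    using lsc_fun_attains_INF[OF _ K] by auto
  then show thesis by (intro that) (simp add: inf_projection_def)
qed

text \<open>Attainment makes each sublevel set of the infimal projection the projection of a
  closed set along the compact factor \<open>K\<close>.\<close>

lemma lsc_fun_inf_projection:
  assumes "\<gamma> \<in> GammaK"
  shows "lsc_fun (\<lambda>(x, p). inf_projection \<gamma> x p)"
  unfolding lsc_fun_def
proof
  fix c :: real
  obtain K where K: "compact K" "\<And>x u p. \<gamma> (x, u) p \<noteq> \<infinity> \<Longrightarrow> u \<in> K"
    using GammaK_dom_compact[OF assms] by metis
  define T where "T = {z. \<gamma> (fst (snd z), fst z) (snd (snd z)) \<le> ereal c}"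
  have "lsc_fun (\<lambda>(y, p). \<gamma> y p)"
    using assms unfolding GammaK_def Gamma_def by blast
  then have "lsc_fun (\<lambda>z. (\<lambda>(y, p). \<gamma> y p) ((fst (snd z), fst z), snd (snd z)))"
    by (rule lsc_fun_compose) (intro continuous_intros)
  then have "closed T"
    unfolding T_def lsc_fun_def by simp
  have "inf_projection \<gamma> x p \<le> ereal c \<longleftrightarrow> (\<exists>u\<in>K. (u, x, p) \<in> T)" for x p
  proof
    assume le: "inf_projection \<gamma> x p \<le> ereal c"
    obtain u where u: "inf_projection \<gamma> x p = \<gamma> (x, u) p"
      using inf_projection_attained[OF assms] .
    with le have "\<gamma> (x, u) p \<le> ereal c" by simp
    moreover from this have "\<gamma> (x, u) p \<noteq> \<infinity>" by auto
    then have "u \<in> K" by (rule K(2))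
    ultimately show "\<exists>u\<in>K. (u, x, p) \<in> T" unfolding T_def by auto
  next
    assume "\<exists>u\<in>K. (u, x, p) \<in> T"
    then obtain u where "\<gamma> (x, u) p \<le> ereal c" unfolding T_def by auto
    then show "inf_projection \<gamma> x p \<le> ereal c"
      using inf_projection_le[of \<gamma> x p u] by simp
  qed
  then have "{z. (\<lambda>(x, p). inf_projection \<gamma> x p) z \<le> ereal c} = {z. \<exists>u. u \<in> K \<and> (u, z) \<in> T}"
    by auto
  then show "closed {z. (\<lambda>(x, p). inf_projection \<gamma> x p) z \<le> ereal c}"
    using closed_compact_projection[OF K(1) \<open>closed T\<close>] by simp
qed

lemma inf_projection_not_MInfty:
  assumes "\<gamma> \<in> GammaK"
  shows "inf_projection \<gamma> x p \<noteq> -\<infinity>"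
proof -
  obtain u where "inf_projection \<gamma> x p = \<gamma> (x, u) p"
    using inf_projection_attained[OF assms] .
  with assms show ?thesis unfolding GammaK_def Gamma_def by auto
qed

lemma convex_fun_inf_projection:
  assumes "\<gamma> \<in> GammaK"
  shows "convex_fun (\<lambda>(x, p). inf_projection \<gamma> x p)"
proof (rule convex_funI_finite)
  show "(\<lambda>(x, p). inf_projection \<gamma> x p) z \<noteq> -\<infinity>" for z
    using inf_projection_not_MInfty[OF assms] by (simp add: case_prod_unfold)
  have cvx: "convex_fun (\<lambda>(y, p). \<gamma> y p)" and not_MInfty: "\<And>y p. \<gamma> y p \<noteq> -\<infinity>"
    using assms unfolding GammaK_def Gamma_def by auto
  fix a b and t :: real
  assume t: "0 < t" "t < 1"
    and fin: "(\<lambda>(x, p). inf_projection \<gamma> x p) a \<noteq> \<infinity>" "(\<lambda>(x, p). inf_projection \<gamma> x p) b \<noteq> \<infinity>"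
  obtain x1 p1 x2 p2 where ab: "a = (x1, p1)" "b = (x2, p2)" by fastforce
  obtain u1 where u1: "inf_projection \<gamma> x1 p1 = \<gamma> (x1, u1) p1"
    using inf_projection_attained[OF assms] .
  obtain u2 where u2: "inf_projection \<gamma> x2 p2 = \<gamma> (x2, u2) p2"
    using inf_projection_attained[OF assms] .
  have fin': "\<gamma> (x1, u1) p1 \<noteq> \<infinity>" "\<gamma> (x2, u2) p2 \<noteq> \<infinity>"
    using fin u1 u2 unfolding ab by simp_all
  have "inf_projection \<gamma> ((1 - t) *\<^sub>R x1 + t *\<^sub>R x2) ((1 - t) *\<^sub>R p1 + t *\<^sub>R p2)
      \<le> \<gamma> ((1 - t) *\<^sub>R x1 + t *\<^sub>R x2, (1 - t) *\<^sub>R u1 + t *\<^sub>R u2) ((1 - t) *\<^sub>R p1 + t *\<^sub>R p2)"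
    by (rule inf_projection_le)
  also have "\<dots> = (\<lambda>(y, p). \<gamma> y p) ((1 - t) *\<^sub>R ((x1, u1), p1) + t *\<^sub>R ((x2, u2), p2))"
    by simp
  also have "\<dots> \<le> ereal ((1 - t) * real_of_ereal (\<gamma> (x1, u1) p1) + t * real_of_ereal (\<gamma> (x2, u2) p2))"
    using convex_funD_finite[OF cvx, of "((x1, u1), p1)" "((x2, u2), p2)" t] fin' t not_MInfty
    by simp
  finally show "(\<lambda>(x, p). inf_projection \<gamma> x p) ((1 - t) *\<^sub>R a + t *\<^sub>R b)
      \<le> ereal ((1 - t) * real_of_ereal ((\<lambda>(x, p). inf_projection \<gamma> x p) a)
               + t * real_of_ereal ((\<lambda>(x, p). inf_projection \<gamma> x p) b))"
    unfolding ab using u1 u2 by simp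
qed

lemma inf_projection_Gamma:
  assumes "\<gamma> \<in> GammaK"
  shows "inf_projection \<gamma> \<in> Gamma"
  using inf_projection_not_MInfty lsc_fun_inf_projection convex_fun_inf_projection assms
  unfolding Gamma_def by blast

section \<open>Differentiability through a smooth majorant\<close>

lemma grad_has_derivative:
  fixes h :: "'p::euclidean_space \<Rightarrow> real"
  assumes "h differentiable (at p)"
  shows "(h has_derivative (\<lambda>k. grad h p \<bullet> k)) (at p)"
proof -
  obtain D where D: "(h has_derivative D) (at p)" using assms unfolding differentiable_def by blast
  then have "linear D" by (rule has_derivative_linear)
  then have "D = (\<lambda>k. adjoint D 1 \<bullet> k)"
    using adjoint_works[of D _ 1] by (simp add: inner_commute)
  with D have "\<exists>v. (h has_derivative (\<lambda>k. v \<bullet> k)) (at p)" by metis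
  then show ?thesis unfolding grad_def by (rule someI_ex)
qed

lemma grad_eqI:
  fixes h :: "'p::euclidean_space \<Rightarrow> real"
  assumes "(h has_derivative (\<lambda>k. v \<bullet> k)) (at p)"
  shows "grad h p = v"
proof -
  have "(h has_derivative (\<lambda>k. grad h p \<bullet> k)) (at p)"
    using assms by (intro grad_has_derivative) (auto simp: differentiable_def)
  from has_derivative_unique[OF this assms] have "(\<lambda>k. grad h p \<bullet> k) = (\<lambda>k. v \<bullet> k)" .
  then show ?thesis by (metis inner_commute vector_eq_rdot)
qed

lemma has_derivative_real_of_ereal_transform:
  assumes "p \<in> interior S" "\<And>q. q \<in> S \<Longrightarrow> v q = ereal (g q)" "(g has_derivative D) (at p)"
  shows "((\<lambda>q. real_of_ereal (v q)) has_derivative D) (at p)"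
  by (rule has_derivative_transform_within_open[OF assms(3) open_interior assms(1)])
    (use assms(2) interior_subset in fastforce)

lemma has_derivative_zero_squeeze:
  fixes e s :: "'p::real_normed_vector \<Rightarrow> real"
  assumes s: "(s has_derivative (\<lambda>h. 0)) (at p)" and e0: "e p = 0"
    and ev: "eventually (\<lambda>y. 0 \<le> e y \<and> e y \<le> s y - s p) (at p)"
  shows "(e has_derivative (\<lambda>h. 0)) (at p)"
  unfolding has_derivative_iff_norm
proof
  show "bounded_linear (\<lambda>h::'p. 0::real)" by simp
  have S: "((\<lambda>y. norm (s y - s p - 0) / norm (y - p)) \<longlongrightarrow> 0) (at p)"
    using s unfolding has_derivative_iff_norm by simp
  show "((\<lambda>y. norm (e y - e p - 0) / norm (y - p)) \<longlongrightarrow> 0) (at p)"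
  proof (rule tendsto_sandwich[OF _ _ tendsto_const S])
    show "eventually (\<lambda>y. 0 \<le> norm (e y - e p - 0) / norm (y - p)) (at p)" by simp
    show "eventually (\<lambda>y. norm (e y - e p - 0) / norm (y - p) \<le> norm (s y - s p - 0) / norm (y - p)) (at p)"
      using ev by eventually_elim (auto simp: e0 intro!: divide_right_mono)
  qed
qed

text \<open>The gap \<open>e = g - v\<close> is nonnegative, vanishes at \<open>p\<close>, and by convexity of \<open>v\<close> at the
  midpoint \<open>p\<close> of \<open>y\<close> and \<open>2p - y\<close> is bounded by the symmetric difference
  \<open>g y + g (2p - y) - 2 g p\<close>, which is \<open>o(|y - p|)\<close>.\<close>

lemma convex_has_derivative_if_smooth_majorant:
  fixes v :: "'p::euclidean_space \<Rightarrow> ereal" and g :: "'p \<Rightarrow> real"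
  assumes p: "p \<in> interior S" and major: "\<And>q. q \<in> S \<Longrightarrow> v q \<le> ereal (g q)"
    and touch: "v p = ereal (g p)" and not_MInfty: "\<And>q. v q \<noteq> -\<infinity>"
    and cvx: "convex_fun v" and dg: "(g has_derivative D) (at p)"
  shows "((\<lambda>q. real_of_ereal (v q)) has_derivative D) (at p)"
proof -
  obtain d where d: "d > 0" "ball p d \<subseteq> S" using p mem_interior by blast
  define r where "r q = real_of_ereal (v q)" for q
  define e where "e q = g q - r q" for q
  define s where "s q = g q + g (p + (p - q))" for q
  have "((\<lambda>q. p + (p - q)) has_derivative (\<lambda>h. - h)) (at p)"
    by (auto intro!: derivative_eq_intros)
  moreover have "(g has_derivative D) (at (p + (p - p)))" using dg by simp
  ultimately have "((\<lambda>q. g (p + (p - q))) has_derivative (\<lambda>h. D (- h))) (at p)"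
    by (rule has_derivative_compose)
  with dg have "(s has_derivative (\<lambda>h. D h + D (- h))) (at p)"
    unfolding s_def by (rule has_derivative_add)
  moreover have "(\<lambda>h. D h + D (- h)) = (\<lambda>h. 0)"
    using has_derivative_linear[OF dg] by (simp add: linear_neg)
  ultimately have s: "(s has_derivative (\<lambda>h. 0)) (at p)" by simp
  have fin: "v q = ereal (r q) \<and> r q \<le> g q" if "q \<in> S" for q
    using major[OF that] not_MInfty[of q] unfolding r_def by (cases "v q") auto
  have e0: "e p = 0" using touch unfolding e_def r_def by simp
  have "0 \<le> e y \<and> e y \<le> s y - s p" if "dist y p < d" for y
  proof -
    have y: "y \<in> S" "p + (p - y) \<in> S" using that d(2)
      by (auto simp: dist_norm norm_minus_commute subset_iff)
    have mid: "(1 - 1/2) *\<^sub>R y + (1/2::real) *\<^sub>R (p + (p - y)) = p"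
      by (simp add: algebra_simps flip: scaleR_add_left)
    have "v p \<le> ereal (1 - 1/2) * v y + ereal (1/2) * v (p + (p - y))"
      using cvx[unfolded convex_fun_def, rule_format, where a = y and b = "p + (p - y)" and t = "1/2"]
      unfolding mid by simp
    then have "g p \<le> r y / 2 + r (p + (p - y)) / 2"
      using fin[OF y(1)] fin[OF y(2)] touch by simp
    then show ?thesis
      using fin[OF y(1)] fin[OF y(2)] unfolding e_def s_def by simp
  qed
  then have "eventually (\<lambda>y. 0 \<le> e y \<and> e y \<le> s y - s p) (at p)"
    unfolding eventually_at using d(1) by blast
  from has_derivative_zero_squeeze[OF s e0 this]
  have "(e has_derivative (\<lambda>h. 0)) (at p)" .
  from has_derivative_diff[OF dg this]
  show ?thesis unfolding e_def r_def by simp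
qed

lemma inf_projection_has_derivative:
  assumes \<gamma>: "\<gamma> \<in> ThetaK P0" and p: "p \<in> interior P0"
    and fin: "inf_projection \<gamma> x p < \<infinity>" and u: "inf_projection \<gamma> x p = \<gamma> (x, u) p"
  shows "((\<lambda>q. real_of_ereal (inf_projection \<gamma> x q)) has_derivative
      (\<lambda>h. grad (\<lambda>q. real_of_ereal (\<gamma> (x, u) q)) p \<bullet> h)) (at p)"
proof (rule convex_has_derivative_if_smooth_majorant[OF p])
  have \<Theta>: "\<gamma> \<in> Theta P0" and K: "\<gamma> \<in> GammaK" using \<gamma> unfolding ThetaK_def by auto
  have not_MInfty: "\<gamma> y q \<noteq> -\<infinity>" for y q
    using K unfolding GammaK_def Gamma_def by blast
  have "\<gamma> (x, u) q = ereal (real_of_ereal (\<gamma> (x, u) q))" if "q \<in> P0" for q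
    using ThetaD(3)[OF \<Theta> _ that, of "(x, u)" p] fin u not_MInfty[of "(x, u)" q]
    by (cases "\<gamma> (x, u) q") auto
  then show "inf_projection \<gamma> x q \<le> ereal (real_of_ereal (\<gamma> (x, u) q))" if "q \<in> P0" for q
    using inf_projection_le[of \<gamma> x q u] that by simp
  show "inf_projection \<gamma> x p = ereal (real_of_ereal (\<gamma> (x, u) p))"
    using fin u not_MInfty[of "(x, u)" p] by (cases "\<gamma> (x, u) p") auto
  show "inf_projection \<gamma> x q \<noteq> -\<infinity>" for q
    using K by (rule inf_projection_not_MInfty)
  show "convex_fun (inf_projection \<gamma> x)"
    using convex_fun_compose_affine[OF convex_fun_inf_projection[OF K] affine_map_Pair[of x]]
    by simp
  show "((\<lambda>q. real_of_ereal (\<gamma> (x, u) q)) has_derivative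
      (\<lambda>h. grad (\<lambda>q. real_of_ereal (\<gamma> (x, u) q)) p \<bullet> h)) (at p)"
    using fin u by (intro grad_has_derivative ThetaD(4)[OF \<Theta> _ p]) simp
qed

lemma inf_projection_Theta:
  assumes \<gamma>: "\<gamma> \<in> ThetaK P0"
  shows "inf_projection \<gamma> \<in> Theta P0"
proof -
  have \<Theta>: "\<gamma> \<in> Theta P0" and K: "\<gamma> \<in> GammaK" using \<gamma> unfolding ThetaK_def by auto
  have dom: "p \<in> P0" "q \<in> P0 \<Longrightarrow> inf_projection \<gamma> y q < \<infinity>"
    if "inf_projection \<gamma> y p < \<infinity>" for y p q
  proof -
    obtain u where u: "inf_projection \<gamma> y p = \<gamma> (y, u) p"
      using inf_projection_attained[OF K] .
    with that show "p \<in> P0" using ThetaD(2)[OF \<Theta>] by auto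
    assume "q \<in> P0"
    with u that have "\<gamma> (y, u) q < \<infinity>" using ThetaD(3)[OF \<Theta>] by auto
    with inf_projection_le[of \<gamma> y q u] show "inf_projection \<gamma> y q < \<infinity>" by auto
  qed
  show ?thesis
  proof (rule ThetaI)
    show "inf_projection \<gamma> \<in> Gamma" using K by (rule inf_projection_Gamma)
  next
    fix y p0 q assume "inf_projection \<gamma> y p0 < \<infinity>" and q: "q \<in> interior P0"
    then have fin: "inf_projection \<gamma> y q < \<infinity>" using dom(2) interior_subset by blast
    obtain u where "inf_projection \<gamma> y q = \<gamma> (y, u) q"
      using inf_projection_attained[OF K] .
    from inf_projection_has_derivative[OF \<gamma> q fin this]
    show "(\<lambda>p. real_of_ereal (inf_projection \<gamma> y p)) differentiable (at q)"
      unfolding differentiable_def by blast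
  qed (use dom in blast)+
qed

section \<open>The Bellman operator\<close>

definition bellman_objective :: "'w pmf \<Rightarrow> ('x \<Rightarrow> 'u \<Rightarrow> 'w \<Rightarrow> 'p \<Rightarrow> ereal) \<Rightarrow> ('x \<Rightarrow> 'u \<Rightarrow> 'w \<Rightarrow> 'x)
    \<Rightarrow> ('x \<Rightarrow> 'p \<Rightarrow> ereal) \<Rightarrow> 'x \<times> 'u \<Rightarrow> 'p \<Rightarrow> ereal" where
  "bellman_objective W L f \<phi> = (\<lambda>(x, u) p. expect W (\<lambda>w. L x u w p + \<phi> (f x u w) p))"

lemma bellman_eq_inf_projection: "bellman W L f \<phi> = inf_projection (bellman_objective W L f \<phi>)"
  by (simp add: fun_eq_iff bellman_def inf_projection_def bellman_objective_def)

context
  fixes W :: "'w pmf"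
    and L :: "'x::euclidean_space \<Rightarrow> 'u::euclidean_space \<Rightarrow> 'w \<Rightarrow> 'p::euclidean_space \<Rightarrow> ereal"
    and f :: "'x \<Rightarrow> 'u \<Rightarrow> 'w \<Rightarrow> 'x"
  assumes finite_support: "finite (set_pmf W)"
    and L_not_MInfty: "\<forall>x u w p. L x u w p \<noteq> -\<infinity>"
    and affine_dynamics: "\<forall>w. affine_map (\<lambda>(x, u). f x u w)"
begin

lemma bellman_objective_less_PInfty_iff:
  assumes "\<phi> \<in> Gamma"
  shows "bellman_objective W L f \<phi> (x, u) p < \<infinity> \<longleftrightarrow>
    (\<forall>w\<in>set_pmf W. L x u w p < \<infinity> \<and> \<phi> (f x u w) p < \<infinity>)"
proof -
  have "\<phi> y q \<noteq> -\<infinity>" for y q using assms unfolding Gamma_def by blast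
  then have "L x u w p + \<phi> (f x u w) p \<noteq> -\<infinity>" for w
    using L_not_MInfty by simp
  then show ?thesis
    unfolding bellman_objective_def using expect_eq_PInfty_iff[OF finite_support]
    by (simp add: less_top[symmetric])
qed

lemma bellman_objective_GammaK:
  assumes L: "\<forall>w\<in>set_pmf W. Lw L w \<in> GammaK" and \<phi>: "\<phi> \<in> Gamma"
  shows "bellman_objective W L f \<phi> \<in> GammaK"
proof -
  have "bellman_objective W L f \<phi> =
      (\<lambda>y p. expect W (\<lambda>w. Lw L w y p + \<phi> ((\<lambda>(x, u). f x u w) y) p))"
    by (simp add: fun_eq_iff bellman_objective_def Lw_def case_prod_unfold)
  also have "\<dots> \<in> Gamma"
  proof (rule Gamma_expect[OF finite_support])
    fix w assume "w \<in> set_pmf W"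
    with L have "Lw L w \<in> Gamma" by (simp add: GammaK_def)
    moreover have "(\<lambda>y p. \<phi> ((\<lambda>(x, u). f x u w) y) p) \<in> Gamma"
      using \<phi> affine_dynamics[rule_format] by (rule Gamma_compose_affine)
    ultimately show "(\<lambda>y p. Lw L w y p + \<phi> ((\<lambda>(x, u). f x u w) y) p) \<in> Gamma"
      by (rule Gamma_add)
  qed
  finally have Gamma: "bellman_objective W L f \<phi> \<in> Gamma" .
  obtain w0 where w0: "w0 \<in> set_pmf W" using set_pmf_not_empty by (meson ex_in_conv)
  then obtain K where K: "compact K" "\<And>x u p. Lw L w0 (x, u) p \<noteq> \<infinity> \<Longrightarrow> u \<in> K"
    using L GammaK_dom_compact by metis
  have "{u. bellman_objective W L f \<phi> (x, u) p < \<infinity>} \<subseteq> K" for x p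
    using w0 K(2)[of x _ p] bellman_objective_less_PInfty_iff[OF \<phi>] by (auto simp: Lw_def)
  with Gamma K(1) show ?thesis unfolding GammaK_def by auto
qed

lemma bellman_Gamma:
  assumes "\<forall>w\<in>set_pmf W. Lw L w \<in> GammaK" and "\<phi> \<in> Gamma"
  shows "bellman W L f \<phi> \<in> Gamma"
  unfolding bellman_eq_inf_projection
  by (rule inf_projection_Gamma[OF bellman_objective_GammaK[OF assms]])

lemma bellman_objective_has_derivative:
  assumes L: "\<forall>w\<in>set_pmf W. Lw L w \<in> ThetaK P0" and \<phi>: "\<phi> \<in> Theta P0"
    and fin: "bellman_objective W L f \<phi> (x, u) p0 < \<infinity>" and p: "p \<in> interior P0"
  shows "((\<lambda>q. real_of_ereal (bellman_objective W L f \<phi> (x, u) q)) has_derivative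
      (\<lambda>h. (\<Sum>w\<in>set_pmf W. pmf W w *\<^sub>R
          (grad (\<lambda>q. real_of_ereal (L x u w q)) p
           + grad (\<lambda>q. real_of_ereal (\<phi> (f x u w) q)) p)) \<bullet> h)) (at p)"
proof -
  let ?S = "set_pmf W"
  have L\<Theta>: "Lw L w \<in> Theta P0" if "w \<in> ?S" for w
    using L that unfolding ThetaK_def by blast
  have \<phi>_not_MInfty: "\<phi> y q \<noteq> -\<infinity>" for y q
    using ThetaD(1)[OF \<phi>] unfolding Gamma_def by blast
  have fin0: "L x u w p0 < \<infinity>" "\<phi> (f x u w) p0 < \<infinity>" if "w \<in> ?S" for w
    using fin that bellman_objective_less_PInfty_iff[OF ThetaD(1)[OF \<phi>]] by auto
  define g where
    "g q = (\<Sum>w\<in>?S. pmf W w * (real_of_ereal (L x u w q) + real_of_ereal (\<phi> (f x u w) q)))" for q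
  have "bellman_objective W L f \<phi> (x, u) q = ereal (g q)" if "q \<in> P0" for q
    unfolding bellman_objective_def g_def
  proof (simp, rule expect_ereal)
    fix w assume "w \<in> ?S"
    then have "L x u w q < \<infinity>" "\<phi> (f x u w) q < \<infinity>"
      using ThetaD(3)[OF L\<Theta>, of w "(x, u)" p0 q] ThetaD(3)[OF \<phi> _ that] fin0 that
      by (auto simp: Lw_def)
    then show "L x u w q + \<phi> (f x u w) q
        = ereal (real_of_ereal (L x u w q) + real_of_ereal (\<phi> (f x u w) q))"
      using L_not_MInfty \<phi>_not_MInfty[of "f x u w" q]
      by (cases "L x u w q"; cases "\<phi> (f x u w) q") auto
  qed
  moreover have "(g has_derivative (\<lambda>h. \<Sum>w\<in>?S. pmf W w *
      (grad (\<lambda>q. real_of_ereal (L x u w q)) p \<bullet> h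
       + grad (\<lambda>q. real_of_ereal (\<phi> (f x u w) q)) p \<bullet> h))) (at p)"
    unfolding g_def[abs_def]
  proof (intro has_derivative_sum has_derivative_mult_right has_derivative_add grad_has_derivative)
    fix w assume "w \<in> ?S"
    then show "(\<lambda>q. real_of_ereal (L x u w q)) differentiable (at p)"
      using ThetaD(4)[OF L\<Theta> _ p, of w "(x, u)" p0] fin0 by (simp add: Lw_def)
    show "(\<lambda>q. real_of_ereal (\<phi> (f x u w) q)) differentiable (at p)"
      using ThetaD(4)[OF \<phi> _ p] fin0 \<open>w \<in> ?S\<close> by blast
  qed
  ultimately show ?thesis
    using p by (intro has_derivative_real_of_ereal_transform)
      (auto simp: inner_sum_left inner_add_left)
qed

lemma bellman_objective_ThetaK:
  assumes L: "\<forall>w\<in>set_pmf W. Lw L w \<in> ThetaK P0" and \<phi>: "\<phi> \<in> Theta P0"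
  shows "bellman_objective W L f \<phi> \<in> ThetaK P0"
proof -
  have L\<Theta>: "Lw L w \<in> Theta P0" if "w \<in> set_pmf W" for w
    using L that unfolding ThetaK_def by blast
  have K: "bellman_objective W L f \<phi> \<in> GammaK"
    using L ThetaD(1)[OF \<phi>] unfolding ThetaK_def by (intro bellman_objective_GammaK) auto
  note fin_iff = bellman_objective_less_PInfty_iff[OF ThetaD(1)[OF \<phi>]]
  obtain w0 where w0: "w0 \<in> set_pmf W" using set_pmf_not_empty by (meson ex_in_conv)
  have "bellman_objective W L f \<phi> \<in> Theta P0"
  proof (rule ThetaI)
    show "bellman_objective W L f \<phi> \<in> Gamma" using K unfolding GammaK_def by blast
  next
    fix y p assume "bellman_objective W L f \<phi> y p < \<infinity>"
    then show "p \<in> P0"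
      using w0 ThetaD(2)[OF L\<Theta>[OF w0], of y p] fin_iff by (cases y) (auto simp: Lw_def)
  next
    fix y p q assume "bellman_objective W L f \<phi> y p < \<infinity>" "q \<in> P0"
    then show "bellman_objective W L f \<phi> y q < \<infinity>"
      using ThetaD(3)[OF L\<Theta>] ThetaD(3)[OF \<phi>] fin_iff by (cases y) (auto simp: Lw_def)
  next
    fix y p0 q assume "bellman_objective W L f \<phi> y p0 < \<infinity>" "q \<in> interior P0"
    then show "(\<lambda>p. real_of_ereal (bellman_objective W L f \<phi> y p)) differentiable (at q)"
      using bellman_objective_has_derivative[OF L \<phi>] unfolding differentiable_def
      by (cases y) blast
  qed
  with K show ?thesis unfolding ThetaK_def by blast
qed

lemma bellman_Theta:
  assumes "\<forall>w\<in>set_pmf W. Lw L w \<in> ThetaK P0" and "\<phi> \<in> Theta P0"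
  shows "bellman W L f \<phi> \<in> Theta P0"
  unfolding bellman_eq_inf_projection
  by (rule inf_projection_Theta[OF bellman_objective_ThetaK[OF assms]])

lemma bellman_attained:
  assumes "\<forall>w\<in>set_pmf W. Lw L w \<in> GammaK" and "\<phi> \<in> Gamma"
  shows "\<exists>u. bellman W L f \<phi> x p = expect W (\<lambda>w. L x u w p + \<phi> (f x u w) p)"
proof -
  obtain u where "inf_projection (bellman_objective W L f \<phi>) x p = bellman_objective W L f \<phi> (x, u) p"
    using inf_projection_attained[OF bellman_objective_GammaK[OF assms]] .
  then show ?thesis unfolding bellman_eq_inf_projection bellman_objective_def by auto
qed

lemma bellman_has_derivative:
  assumes L: "\<forall>w\<in>set_pmf W. Lw L w \<in> ThetaK P0" and \<phi>: "\<phi> \<in> Theta P0"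
    and fin: "bellman W L f \<phi> x p < \<infinity>" and p: "p \<in> interior P0"
    and u: "bellman W L f \<phi> x p = expect W (\<lambda>w. L x u w p + \<phi> (f x u w) p)"
  shows "((\<lambda>q. real_of_ereal (bellman W L f \<phi> x q)) has_derivative
      (\<lambda>h. (\<Sum>w\<in>set_pmf W. pmf W w *\<^sub>R
          (grad (\<lambda>q. real_of_ereal (L x u w q)) p
           + grad (\<lambda>q. real_of_ereal (\<phi> (f x u w) q)) p)) \<bullet> h)) (at p)"
proof -
  let ?Q = "bellman_objective W L f \<phi>"
  have u': "inf_projection ?Q x p = ?Q (x, u) p" and fin': "inf_projection ?Q x p < \<infinity>"
    using u fin by (simp_all add: bellman_eq_inf_projection bellman_objective_def)
  have "grad (\<lambda>q. real_of_ereal (?Q (x, u) q)) p = (\<Sum>w\<in>set_pmf W. pmf W w *\<^sub>R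
      (grad (\<lambda>q. real_of_ereal (L x u w q)) p + grad (\<lambda>q. real_of_ereal (\<phi> (f x u w) q)) p))"
    using fin' u' by (intro grad_eqI bellman_objective_has_derivative[OF L \<phi> _ p]) simp
  with inf_projection_has_derivative[OF bellman_objective_ThetaK[OF L \<phi>] p fin' u']
  show ?thesis unfolding bellman_eq_inf_projection by simp
qed

end

theorem theorem1:
  fixes W :: "'w::euclidean_space pmf"
    and L :: "'x::euclidean_space \<Rightarrow> 'u::euclidean_space \<Rightarrow> 'w \<Rightarrow> 'p::euclidean_space \<Rightarrow> ereal"
    and f :: "'x \<Rightarrow> 'u \<Rightarrow> 'w \<Rightarrow> 'x"
  assumes "finite (set_pmf W)"
    and "\<forall>x u w p. L x u w p \<noteq> -\<infinity>"
    and "\<forall>w. affine_map (\<lambda>(x,u). f x u w)"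
  shows
   "((\<forall>w\<in>set_pmf W. Lw L w \<in> GammaK) \<longrightarrow>
        (\<forall>\<phi>\<in>Gamma. bellman W L f \<phi> \<in> Gamma))
    \<and> (\<forall>P0 :: 'p set. (\<forall>w\<in>set_pmf W. Lw L w \<in> ThetaK P0) \<longrightarrow>
        (\<forall>\<phi>\<in>Theta P0. bellman W L f \<phi> \<in> Theta P0) \<and>
        (\<forall>\<phi>\<in>Theta P0. \<forall>x p. bellman W L f \<phi> x p < \<infinity> \<and> p \<in> interior P0 \<longrightarrow>
           (\<exists>u. bellman W L f \<phi> x p = expect W (\<lambda>w. L x u w p + \<phi> (f x u w) p)) \<and>
           (\<forall>u. bellman W L f \<phi> x p = expect W (\<lambda>w. L x u w p + \<phi> (f x u w) p) \<longrightarrow>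
              ((\<lambda>q. real_of_ereal (bellman W L f \<phi> x q)) has_derivative
                 (\<lambda>h. (\<Sum>w\<in>set_pmf W. pmf W w *\<^sub>R
                     (grad (\<lambda>q. real_of_ereal (L x u w q)) p
                      + grad (\<lambda>q. real_of_ereal (\<phi> (f x u w) q)) p)) \<bullet> h)) (at p))))"
proof (intro conjI impI ballI allI)
  fix \<phi> :: "'x \<Rightarrow> 'p \<Rightarrow> ereal"
  assume "\<forall>w\<in>set_pmf W. Lw L w \<in> GammaK" "\<phi> \<in> Gamma"
  then show "bellman W L f \<phi> \<in> Gamma" by (rule bellman_Gamma[OF assms])
next
  fix P0 :: "'p set" and \<phi> :: "'x \<Rightarrow> 'p \<Rightarrow> ereal"
  assume "\<forall>w\<in>set_pmf W. Lw L w \<in> ThetaK P0" "\<phi> \<in> Theta P0"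
  then show "bellman W L f \<phi> \<in> Theta P0" by (rule bellman_Theta[OF assms])
next
  fix P0 :: "'p set" and \<phi> :: "'x \<Rightarrow> 'p \<Rightarrow> ereal" and x p
  assume "\<forall>w\<in>set_pmf W. Lw L w \<in> ThetaK P0" "\<phi> \<in> Theta P0"
  then show "\<exists>u. bellman W L f \<phi> x p = expect W (\<lambda>w. L x u w p + \<phi> (f x u w) p)"
    unfolding ThetaK_def by (intro bellman_attained[OF assms] ThetaD(1)) auto
next
  fix P0 :: "'p set" and \<phi> :: "'x \<Rightarrow> 'p \<Rightarrow> ereal" and x p u
  assume "\<forall>w\<in>set_pmf W. Lw L w \<in> ThetaK P0" "\<phi> \<in> Theta P0"
    "bellman W L f \<phi> x p < \<infinity> \<and> p \<in> interior P0"
    "bellman W L f \<phi> x p = expect W (\<lambda>w. L x u w p + \<phi> (f x u w) p)"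
  then show "((\<lambda>q. real_of_ereal (bellman W L f \<phi> x q)) has_derivative
      (\<lambda>h. (\<Sum>w\<in>set_pmf W. pmf W w *\<^sub>R
          (grad (\<lambda>q. real_of_ereal (L x u w q)) p
           + grad (\<lambda>q. real_of_ereal (\<phi> (f x u w) q)) p)) \<bullet> h)) (at p)"
    by (intro bellman_has_derivative[OF assms]) auto
qed

end
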